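(* Let $G$ and $H$ be ordered graphs, each with at least $3$ vertices and each with $m$ edges. Suppose $G$ is $3$-connected, $H$ has no isolated vertices, and $M_{1,G}=M_{1,H}$. Then there is a bijection $\sigma$ from the vertices of $G$ to the vertices of $H$ such that for every $k$, if the $k$-th edge of $G$ is $\{i,j\}$ then the $k$-th edge of $H$ is $\{\sigma(i),\sigma(j)\}$.
   Context: An ordered graph is a finite vertex set with an ordered sequence $(E_1,\dots,E_m)$ of distinct unordered pairs of distinct vertices. For a configuration $\mathbf p$ assigning a number $\mathbf p_i\in\mathbb C$ to each vertex, $m_G(\mathbf p)\in\mathbb C^m$ has $k$-th coordinate $(\mathbf p_i-\mathbf p_j)^2$ with $E_k=\{i,j\}$. $M_{1,G}\subseteq\mathbb C^m$ is the Zariski closure of the image of $m_G$ over all such configurations. *)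

theory Defs
  imports Complex_Main
begin

text \<open>An ordered graph: finite vertex set V and an edge list E of pairs (i,j);
  the k-th edge is the unordered pair {i,j}.\<close>
definition ordered_graph :: "'a set \<Rightarrow> ('a \<times> 'a) list \<Rightarrow> bool" where
  "ordered_graph V E \<longleftrightarrow> finite V \<and>
     (\<forall>(i,j) \<in> set E. i \<in> V \<and> j \<in> V \<and> i \<noteq> j) \<and>
     distinct (map (\<lambda>(i,j). {i,j}) E)"

definition meas_map :: "('a \<times> 'a) list \<Rightarrow> ('a \<Rightarrow> complex) \<Rightarrow> complex list" where
  "meas_map E p = map (\<lambda>(i,j). (p i - p j)^2) E"

inductive_set poly_fun :: "nat \<Rightarrow> (complex list \<Rightarrow> complex) set" for m :: nat where
  pf_const: "(\<lambda>x. c) \<in> poly_fun m"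
| pf_var: "k < m \<Longrightarrow> (\<lambda>x. x ! k) \<in> poly_fun m"
| pf_add: "f \<in> poly_fun m \<Longrightarrow> g \<in> poly_fun m \<Longrightarrow> (\<lambda>x. f x + g x) \<in> poly_fun m"
| pf_mult: "f \<in> poly_fun m \<Longrightarrow> g \<in> poly_fun m \<Longrightarrow> (\<lambda>x. f x * g x) \<in> poly_fun m"

definition zariski_closure :: "nat \<Rightarrow> complex list set \<Rightarrow> complex list set" where
  "zariski_closure m S = {x. length x = m \<and>
     (\<forall>f \<in> poly_fun m. (\<forall>y \<in> S. f y = 0) \<longrightarrow> f x = 0)}"

definition M1 :: "('a \<times> 'a) list \<Rightarrow> complex list set" where
  "M1 E = zariski_closure (length E) (range (meas_map E))"

definition adj :: "('a \<times> 'a) list \<Rightarrow> 'a \<Rightarrow> 'a \<Rightarrow> bool" where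
  "adj E u v \<longleftrightarrow> (\<exists>(i,j) \<in> set E. {i,j} = {u,v})"

definition connected_on :: "'a set \<Rightarrow> ('a \<times> 'a) list \<Rightarrow> bool" where
  "connected_on W E \<longleftrightarrow> W \<noteq> {} \<and>
     (\<forall>u \<in> W. \<forall>v \<in> W. (\<lambda>x y. x \<in> W \<and> y \<in> W \<and> adj E x y)\<^sup>*\<^sup>* u v)"

definition k_connected :: "nat \<Rightarrow> 'a set \<Rightarrow> ('a \<times> 'a) list \<Rightarrow> bool" where
  "k_connected k V E \<longleftrightarrow> card V > k \<and>
     (\<forall>X \<subseteq> V. card X < k \<longrightarrow> connected_on (V - X) E)"

definition no_isolated :: "'a set \<Rightarrow> ('a \<times> 'a) list \<Rightarrow> bool" where
  "no_isolated V E \<longleftrightarrow> (\<forall>v \<in> V. \<exists>(i,j) \<in> set E. v = i \<or> v = j)"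

end

theory Submission
  imports Defs
begin

text \<open>For an edge set S, the coordinates of M_{1,G} indexed by S are algebraically dependent
  exactly when S contains a cycle of G. A cycle yields a linear relation among the edge
  differences p_i - p_j, and the product of its images under all sign changes is a polynomial
  in their squares; conversely, along a forest the squared edge differences can be prescribed
  freely. So M_{1,G} = M_{1,H} forces G and H to have the same graphic matroid on the common
  edge indices. In a 3-connected graph every vertex star is a nonseparating cocircuit of the
  graphic matroid, and in any graph every nonseparating cocircuit is a vertex star. Hence each
  star of G is a star of H, and matching the stars gives the bijection.\<close>

section \<open>Polynomial functions even in some coordinates\<close>

lemma poly_fun_sum:
  "finite A \<Longrightarrow> (\<And>a. a \<in> A \<Longrightarrow> F a \<in> poly_fun m) \<Longrightarrow> (\<lambda>x. \<Sum>a\<in>A. F a x) \<in> poly_fun m"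
proof (induction A rule: finite_induct)
  case empty then show ?case using poly_fun.pf_const[of 0] by simp
next
  case (insert a A) then show ?case by (simp add: poly_fun.pf_add)
qed

lemma poly_fun_prod:
  "finite A \<Longrightarrow> (\<And>a. a \<in> A \<Longrightarrow> F a \<in> poly_fun m) \<Longrightarrow> (\<lambda>x. \<Prod>a\<in>A. F a x) \<in> poly_fun m"
proof (induction A rule: finite_induct)
  case empty then show ?case using poly_fun.pf_const[of 1] by simp
next
  case (insert a A) then show ?case by (simp add: poly_fun.pf_mult)
qed

lemma poly_fun_subst:
  assumes "f \<in> poly_fun m" "\<And>k. k < m \<Longrightarrow> h k \<in> poly_fun m"
  shows "(\<lambda>x. f (map (\<lambda>k. h k x) [0..<m])) \<in> poly_fun m"
  using assms(1)
proof induction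
  case (pf_var k) then show ?case using assms(2)[of k] by simp
qed (auto intro: poly_fun.intros)

lemma poly_fun_odd_even_decomp:
  assumes "g \<in> poly_fun m" "n < m"
  shows "\<exists>a\<in>poly_fun m. \<exists>b\<in>poly_fun m. \<forall>y. length y = m \<longrightarrow>
     g y = a (y[n := (y!n)^2]) + (y!n) * b (y[n := (y!n)^2])"
  using assms(1)
proof induction
  case (pf_const c)
  show ?case
    by (intro bexI[of _ "\<lambda>x. c"] bexI[of _ "\<lambda>x. 0"]) (auto intro: poly_fun.pf_const)
next
  case (pf_var k)
  show ?case
  proof (cases "k = n")
    case True
    then show ?thesis
      by (intro bexI[of _ "\<lambda>x. 0"] bexI[of _ "\<lambda>x. 1"]) (auto intro: poly_fun.pf_const)
  next
    case False
    then show ?thesis using pf_var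
      by (intro bexI[of _ "\<lambda>x. x ! k"] bexI[of _ "\<lambda>x. 0"]) (auto intro: poly_fun.intros)
  qed
next
  case (pf_add f g)
  then obtain a1 b1 a2 b2 where
    "a1 \<in> poly_fun m" "b1 \<in> poly_fun m" "a2 \<in> poly_fun m" "b2 \<in> poly_fun m"
    "\<forall>y. length y = m \<longrightarrow> f y = a1 (y[n := (y!n)^2]) + (y!n) * b1 (y[n := (y!n)^2])"
    "\<forall>y. length y = m \<longrightarrow> g y = a2 (y[n := (y!n)^2]) + (y!n) * b2 (y[n := (y!n)^2])"
    by blast
  then show ?case
    by (intro bexI[of _ "\<lambda>x. a1 x + a2 x"] bexI[of _ "\<lambda>x. b1 x + b2 x"])
       (auto intro: poly_fun.intros simp: algebra_simps)
next
  case (pf_mult f g)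
  then obtain a1 b1 a2 b2 where ab:
    "a1 \<in> poly_fun m" "b1 \<in> poly_fun m" "a2 \<in> poly_fun m" "b2 \<in> poly_fun m"
    "\<forall>y. length y = m \<longrightarrow> f y = a1 (y[n := (y!n)^2]) + (y!n) * b1 (y[n := (y!n)^2])"
    "\<forall>y. length y = m \<longrightarrow> g y = a2 (y[n := (y!n)^2]) + (y!n) * b2 (y[n := (y!n)^2])"
    by blast
  have "(\<lambda>x. x ! n) \<in> poly_fun m" using assms(2) by (rule poly_fun.pf_var)
  with ab show ?case
    by (intro bexI[of _ "\<lambda>x. a1 x * a2 x + x ! n * (b1 x * b2 x)"]
        bexI[of _ "\<lambda>x. a1 x * b2 x + a2 x * b1 x"])
       (auto intro!: poly_fun.intros simp: algebra_simps power2_eq_square assms(2))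
qed

lemma poly_fun_even_in_coord:
  assumes "g \<in> poly_fun m" "n < m" "\<And>y. length y = m \<Longrightarrow> g (y[n := - (y!n)]) = g y"
  shows "\<exists>a\<in>poly_fun m. \<forall>y. length y = m \<longrightarrow> g y = a (y[n := (y!n)^2])"
proof -
  obtain a b where ab: "a \<in> poly_fun m" "\<forall>y. length y = m \<longrightarrow>
     g y = a (y[n := (y!n)^2]) + (y!n) * b (y[n := (y!n)^2])"
    using poly_fun_odd_even_decomp[OF assms(1,2)] by blast
  show ?thesis
  proof (intro bexI[OF _ ab(1)] allI impI)
    fix y :: "complex list" assume l: "length y = m"
    let ?y = "y[n := - (y!n)]"
    have "?y[n := (?y!n)^2] = y[n := (y!n)^2]" using l assms(2) by simp
    then have "g ?y = a (y[n := (y!n)^2]) - (y!n) * b (y[n := (y!n)^2])"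
      using ab(2)[rule_format, of ?y] l assms(2) by simp
    moreover have "g y = a (y[n := (y!n)^2]) + (y!n) * b (y[n := (y!n)^2])" using ab(2) l by simp
    ultimately show "g y = a (y[n := (y!n)^2])" using assms(3)[OF l] by (simp add: algebra_simps)
  qed
qed

definition square_coords :: "nat set \<Rightarrow> complex list \<Rightarrow> complex list" where
  "square_coords S y = map (\<lambda>k. if k \<in> S then (y!k)^2 else y!k) [0..<length y]"

definition sqrt_coords :: "nat set \<Rightarrow> complex list \<Rightarrow> complex list" where
  "sqrt_coords S y = map (\<lambda>k. if k \<in> S then csqrt (y!k) else y!k) [0..<length y]"

lemma square_coords_sqrt_coords [simp]: "square_coords S (sqrt_coords S z) = z"
  by (rule nth_equalityI) (auto simp: square_coords_def sqrt_coords_def)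

lemma length_square_coords [simp]: "length (square_coords S y) = length y"
  by (simp add: square_coords_def)

lemma length_sqrt_coords [simp]: "length (sqrt_coords S y) = length y"
  by (simp add: sqrt_coords_def)

lemma poly_fun_even_in_coords:
  assumes "finite S" "S \<subseteq> {..<m}" "g \<in> poly_fun m"
    "\<And>n y. n \<in> S \<Longrightarrow> length y = m \<Longrightarrow> g (y[n := - (y!n)]) = g y"
  shows "\<exists>f\<in>poly_fun m. \<forall>y. length y = m \<longrightarrow> g y = f (square_coords S y)"
  using assms
proof (induction S rule: finite_induct)
  case empty
  have "square_coords {} y = y" for y by (rule nth_equalityI) (auto simp: square_coords_def)
  then show ?case using empty.prems(2) by (intro bexI[of _ g]) auto
next
  case (insert n S)
  have n: "n < m" using insert.prems(1) by auto
  obtain f where f: "f \<in> poly_fun m" "\<forall>y. length y = m \<longrightarrow> g y = f (square_coords S y)"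
    using insert.IH insert.prems by blast
  have f_sqrt: "f z = g (sqrt_coords S z)" if "length z = m" for z
    using f(2) that by simp
  have "f (z[n := - (z!n)]) = f z" if l: "length z = m" for z
  proof -
    have "sqrt_coords S (z[n := - (z!n)]) = (sqrt_coords S z)[n := - (sqrt_coords S z ! n)]"
      using insert.hyps(2) l n
      by (intro nth_equalityI) (auto simp: sqrt_coords_def nth_list_update)
    then show ?thesis
      using f_sqrt l insert.prems(3)[of n "sqrt_coords S z"] by simp
  qed
  then obtain a where a: "a \<in> poly_fun m" "\<forall>z. length z = m \<longrightarrow> f z = a (z[n := (z!n)^2])"
    using poly_fun_even_in_coord[OF f(1) n] by blast
  show ?case
  proof (intro bexI[OF _ a(1)] allI impI)
    fix y :: "complex list" assume l: "length y = m"
    have "(square_coords S y)[n := (square_coords S y ! n)^2] = square_coords (insert n S) y"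
      using insert.hyps(2) l n
      by (intro nth_equalityI) (auto simp: square_coords_def nth_list_update)
    then show "g y = a (square_coords (insert n S) y)" using f(2) a(2) l by simp
  qed
qed

section \<open>Algebraic dependence among the measurements\<close>

definition edge_diff :: "('a \<times> 'a) list \<Rightarrow> ('a \<Rightarrow> complex) \<Rightarrow> nat \<Rightarrow> complex" where
  "edge_diff E p k = p (fst (E!k)) - p (snd (E!k))"

lemma length_meas_map [simp]: "length (meas_map E p) = length E"
  by (simp add: meas_map_def)

lemma nth_meas_map: "k < length E \<Longrightarrow> meas_map E p ! k = (edge_diff E p k)^2"
  by (simp add: meas_map_def edge_diff_def split_beta)

lemma meas_map_in_M1: "meas_map E p \<in> M1 E"
  unfolding M1_def zariski_closure_def by auto

text \<open>S is dependent in the algebraic matroid of M1 E.\<close>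
definition alg_dependent :: "('a \<times> 'a) list \<Rightarrow> nat set \<Rightarrow> bool" where
  "alg_dependent E S \<longleftrightarrow> (\<exists>f\<in>poly_fun (length E). (\<forall>p. f (meas_map E p) = 0) \<and>
     (\<exists>x. length x = length E \<and> f x \<noteq> 0) \<and>
     (\<forall>x x'. length x = length E \<longrightarrow> length x' = length E \<longrightarrow>
        (\<forall>k\<in>S. x!k = x'!k) \<longrightarrow> f x = f x'))"

lemma alg_dependent_transfer:
  assumes "length E = length E'" "M1 E = M1 E'" "alg_dependent E S"
  shows "alg_dependent E' S"
proof -
  obtain f where f: "f \<in> poly_fun (length E)" "\<forall>p. f (meas_map E p) = 0"
    "\<exists>x. length x = length E \<and> f x \<noteq> 0"
    "\<forall>x x'. length x = length E \<longrightarrow> length x' = length E \<longrightarrow> (\<forall>k\<in>S. x!k = x'!k) \<longrightarrow> f x = f x'"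
    using assms(3) unfolding alg_dependent_def by blast
  have "f (meas_map E' p) = 0" for p
    using meas_map_in_M1[of E' p] f(1,2) assms(2) unfolding M1_def zariski_closure_def by blast
  then show ?thesis unfolding alg_dependent_def using f assms(1) by metis
qed

text \<open>The product of the linear forms \<open>\<Sum>i\<in>S. \<plusminus>c i * y!i\<close> over all sign patterns
  is even in each coordinate of S, hence a polynomial in the squares of these coordinates.\<close>
definition sign_norm :: "(nat \<Rightarrow> complex) \<Rightarrow> nat set \<Rightarrow> complex list \<Rightarrow> complex" where
  "sign_norm c S y = (\<Prod>A\<in>Pow S. \<Sum>i\<in>S. (if i \<in> A then - c i else c i) * y!i)"

lemma sign_norm_poly_fun:
  assumes "S \<subseteq> {..<m}"
  shows "sign_norm c S \<in> poly_fun m"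
proof -
  have "finite S" using assms finite_subset by blast
  then show ?thesis
    unfolding sign_norm_def using assms
    by (intro poly_fun_prod poly_fun_sum poly_fun.pf_mult[OF poly_fun.pf_const poly_fun.pf_var])
       auto
qed

lemma sign_norm_flip:
  assumes "S \<subseteq> {..<length y}" "n \<in> S"
  shows "sign_norm c S (y[n := - (y!n)]) = sign_norm c S y"
proof -
  define flip where "flip A = (if n \<in> A then A - {n} else insert n A)" for A :: "nat set"
  have "(if i \<in> A then - c i else c i) * y[n := - (y!n)] ! i
      = (if i \<in> flip A then - c i else c i) * y!i" if "i \<in> S" for A i
    using assms that by (cases "i = n") (auto simp: flip_def)
  then have "sign_norm c S (y[n := - (y!n)])
      = (\<Prod>A\<in>Pow S. \<Sum>i\<in>S. (if i \<in> flip A then - c i else c i) * y!i)"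
    unfolding sign_norm_def by (intro prod.cong sum.cong refl)
  also have "\<dots> = sign_norm c S y"
    unfolding sign_norm_def using assms(2)
    by (intro prod.reindex_bij_witness[where i=flip and j=flip]) (auto simp: flip_def)
  finally show ?thesis .
qed

lemma sign_norm_eq_0:
  assumes "finite S" "(\<Sum>i\<in>S. c i * y!i) = 0"
  shows "sign_norm c S y = 0"
  unfolding sign_norm_def using assms by (intro prod_zero bexI[of _ "{}"]) auto

lemma sign_norm_unit_vector:
  assumes "S \<subseteq> {..<m}" "k \<in> S" "c k \<noteq> 0"
  shows "sign_norm c S (map (\<lambda>i. if i = k then 1 else 0) [0..<m]) \<noteq> 0"
proof -
  have "finite S" using assms(1) finite_subset by blast
  moreover have "(\<Sum>i\<in>S. (if i \<in> A then - c i else c i) * map (\<lambda>i. if i = k then 1 else 0) [0..<m] ! i)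
      = (if k \<in> A then - c k else c k)" for A
    using assms(1,2) \<open>finite S\<close> by (simp add: subset_eq if_distrib[of "\<lambda>x. _ * x"] sum.If_cases)
  ultimately show ?thesis
    unfolding sign_norm_def using assms(3) by simp
qed

lemma linear_relation_alg_dependent:
  assumes "S \<subseteq> {..<length E}" "k \<in> S" "c k \<noteq> 0"
    "\<And>p. (\<Sum>i\<in>S. c i * edge_diff E p i) = 0"
  shows "alg_dependent E S"
proof -
  define m where "m = length E"
  have S: "finite S" "S \<subseteq> {..<m}" using assms(1) finite_subset m_def by blast+
  have "\<exists>f\<in>poly_fun m. \<forall>y. length y = m \<longrightarrow> sign_norm c S y = f (square_coords S y)"
    using S by (intro poly_fun_even_in_coords sign_norm_poly_fun sign_norm_flip) auto
  then obtain f where f: "f \<in> poly_fun m" "\<forall>y. length y = m \<longrightarrow> sign_norm c S y = f (square_coords S y)"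
    by blast
  define restr where "restr x = map (\<lambda>k. if k \<in> S then x!k else 0) [0..<m]" for x :: "complex list"
  define F where "F x = f (restr x)" for x
  define u where "u = map (\<lambda>i. if i = k then 1 else (0::complex)) [0..<m]"
  have "F \<in> poly_fun m"
    unfolding F_def restr_def
  proof (rule poly_fun_subst[OF f(1), of "\<lambda>k x. if k \<in> S then x!k else 0", simplified])
    show "(\<lambda>x. if k \<in> S then x!k else 0) \<in> poly_fun m" if "k < m" for k
      using that by (cases "k \<in> S") (auto intro: poly_fun.intros)
  qed
  moreover have "F (meas_map E p) = 0" for p
  proof -
    define y where "y = map (\<lambda>k. if k \<in> S then edge_diff E p k else 0) [0..<m]"
    have "square_coords S y = restr (meas_map E p)"
      by (rule nth_equalityI) (auto simp: square_coords_def restr_def y_def m_def nth_meas_map)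
    then have "F (meas_map E p) = sign_norm c S y" using f(2) by (simp add: F_def y_def)
    also have "\<dots> = 0"
      using assms(4)[of p] S by (intro sign_norm_eq_0) (auto simp: y_def subset_eq intro: sum.cong)
    finally show ?thesis .
  qed
  moreover have "F u \<noteq> 0" "length u = m"
  proof -
    have "restr u = u" "square_coords S u = u"
      using assms(2) by (auto simp: restr_def square_coords_def u_def intro!: nth_equalityI)
    then show "F u \<noteq> 0"
      using f(2) sign_norm_unit_vector[of S m k c, OF S(2) assms(2,3)] by (simp add: F_def u_def)
  qed (simp add: u_def)
  moreover have "F x = F x'" if "\<forall>k\<in>S. x!k = x'!k" for x x'
    using that unfolding F_def restr_def by (metis (mono_tags, lifting) map_eq_conv)
  ultimately show ?thesis
    unfolding alg_dependent_def m_def[symmetric]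
    by (intro bexI[of _ F] conjI exI[of _ u]) simp_all
qed

section \<open>The graphic matroid\<close>

definition edge_step :: "('a \<times> 'a) list \<Rightarrow> nat set \<Rightarrow> 'a \<Rightarrow> 'a \<Rightarrow> bool" where
  "edge_step E T x y \<longleftrightarrow> (\<exists>i\<in>T. {x, y} = {fst (E!i), snd (E!i)})"

abbreviation connected_by :: "('a \<times> 'a) list \<Rightarrow> nat set \<Rightarrow> 'a \<Rightarrow> 'a \<Rightarrow> bool" where
  "connected_by E T \<equiv> (edge_step E T)\<^sup>*\<^sup>*"

definition spans :: "('a \<times> 'a) list \<Rightarrow> nat set \<Rightarrow> nat \<Rightarrow> bool" where
  "spans E T e \<longleftrightarrow> connected_by E T (fst (E!e)) (snd (E!e))"

definition has_cycle :: "('a \<times> 'a) list \<Rightarrow> nat set \<Rightarrow> bool" where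
  "has_cycle E S \<longleftrightarrow> (\<exists>k\<in>S. spans E (S - {k}) k)"

lemma edge_stepE:
  assumes "edge_step E T x y"
  obtains i where "i \<in> T" "x = fst (E!i)" "y = snd (E!i)"
    | i where "i \<in> T" "x = snd (E!i)" "y = fst (E!i)"
  using assms unfolding edge_step_def by (auto simp: doubleton_eq_iff)

lemma connected_by_sym: "connected_by E T x y \<Longrightarrow> connected_by E T y x"
proof (induction rule: rtranclp_induct)
  case (step y z)
  have "edge_step E T z y"
    using step(2) unfolding edge_step_def by (auto simp: insert_commute)
  then show ?case using step(3) by (rule converse_rtranclp_into_rtranclp)
qed simp

lemma connected_by_mono:
  assumes "connected_by E T x y" "T \<subseteq> T'"
  shows "connected_by E T' x y"
proof -
  have "edge_step E T \<le> edge_step E T'"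
    using assms(2) unfolding edge_step_def by blast
  then show ?thesis using assms(1) by (metis rtranclp_mono predicate2D)
qed

lemma spans_mem: "i \<in> T \<Longrightarrow> spans E T i"
  unfolding spans_def edge_step_def by (rule r_into_rtranclp) blast

lemma spans_mono: "spans E T e \<Longrightarrow> T \<subseteq> T' \<Longrightarrow> spans E T' e"
  unfolding spans_def by (rule connected_by_mono)

lemma spans_sym: "spans E T e \<Longrightarrow> connected_by E T (snd (E!e)) (fst (E!e))"
  unfolding spans_def by (rule connected_by_sym)

lemma spans_iff_connected_by:
  assumes "{fst (E!i), snd (E!i)} = {x, y}"
  shows "spans E T i \<longleftrightarrow> connected_by E T x y"
  using assms connected_by_sym unfolding spans_def by (auto simp: doubleton_eq_iff)

lemma has_cycle_mono: "has_cycle E S \<Longrightarrow> S \<subseteq> S' \<Longrightarrow> has_cycle E S'"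
  unfolding has_cycle_def by (meson Diff_mono spans_mono order_refl subsetD)

lemma connected_by_linear_combination:
  assumes "connected_by E T u w" "finite T"
  shows "\<exists>c. \<forall>p. p u - p w = (\<Sum>i\<in>T. c i * edge_diff E p i)"
  using assms(1)
proof (induction rule: rtranclp_induct)
  case base
  show ?case by (rule exI[of _ "\<lambda>_. 0"]) simp
next
  case (step x y)
  obtain c where c: "\<forall>p. p u - p x = (\<Sum>i\<in>T. c i * edge_diff E p i)"
    using step.IH by blast
  obtain i s where i: "i \<in> T" and s: "\<forall>p. p x - p y = s * edge_diff E p i"
    using step(2)
  proof (cases rule: edge_stepE)
    case (1 i) then show ?thesis using that[of i 1] by (simp add: edge_diff_def)
  next
    case (2 i) then show ?thesis using that[of i "-1"] by (simp add: edge_diff_def)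
  qed
  have "p u - p y = (\<Sum>j\<in>T. (c j + (if j = i then s else 0)) * edge_diff E p j)" for p
  proof -
    have "(\<Sum>j\<in>T. (c j + (if j = i then s else 0)) * edge_diff E p j)
        = (\<Sum>j\<in>T. c j * edge_diff E p j) + (\<Sum>j\<in>T. if j = i then s * edge_diff E p j else 0)"
      by (subst sum.distrib[symmetric], rule sum.cong) (auto simp: algebra_simps)
    also have "\<dots> = (p u - p x) + (p x - p y)" using c s i assms(2) by simp
    finally show ?thesis by simp
  qed
  then show ?case by (intro exI[of _ "\<lambda>j. c j + (if j = i then s else 0)"]) blast
qed

lemma has_cycle_alg_dependent:
  assumes "S \<subseteq> {..<length E}" "has_cycle E S"
  shows "alg_dependent E S"
proof -
  have fin: "finite S" using finite_subset[OF assms(1)] by simp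
  obtain k where k: "k \<in> S" "spans E (S - {k}) k"
    using assms(2) unfolding has_cycle_def by blast
  obtain c where c: "\<forall>p. p (fst (E!k)) - p (snd (E!k)) = (\<Sum>i\<in>S-{k}. c i * edge_diff E p i)"
    using connected_by_linear_combination[OF k(2)[unfolded spans_def] finite_Diff[OF fin]] by blast
  show ?thesis
  proof (rule linear_relation_alg_dependent[OF assms(1) k(1), of "c(k := -1)"])
    fix p
    have "(\<Sum>i\<in>S. (c(k := -1)) i * edge_diff E p i)
        = - edge_diff E p k + (\<Sum>i\<in>S-{k}. c i * edge_diff E p i)"
      by (simp add: sum.remove[OF fin k(1)] cong: sum.cong_simp)
    also have "\<dots> = 0"
      unfolding c[rule_format, of p, symmetric] by (simp add: edge_diff_def)
    finally show "(\<Sum>i\<in>S. (c(k := -1)) i * edge_diff E p i) = 0" .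
  qed simp
qed

text \<open>Add the edges one at a time, shifting the component of one endpoint of the new edge
  by a constant.\<close>
lemma acyclic_edge_diffs_surj:
  assumes "finite S" "\<not> has_cycle E S"
  shows "\<exists>p. \<forall>k\<in>S. (edge_diff E p k)^2 = x!k"
  using assms
proof (induction S rule: finite_induct)
  case (insert k S)
  obtain p' where p': "\<forall>j\<in>S. (edge_diff E p' j)^2 = x!j"
    using insert.IH insert.prems has_cycle_mono by blast
  have nk: "\<not> spans E S k"
    using insert.prems insert.hyps(2) unfolding has_cycle_def by auto
  define a where "a = fst (E!k)"
  define \<delta> where "\<delta> = csqrt (x!k) - edge_diff E p' k"
  define p where "p z = p' z + (if connected_by E S a z then \<delta> else 0)" for z
  have "edge_diff E p k = edge_diff E p' k + \<delta>"
    using nk by (simp add: edge_diff_def p_def a_def spans_def)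
  moreover have "edge_diff E p j = edge_diff E p' j" if "j \<in> S" for j
  proof -
    have "connected_by E S (fst (E!j)) (snd (E!j))" "connected_by E S (snd (E!j)) (fst (E!j))"
      using spans_mem[OF that] spans_sym[OF spans_mem[OF that]] unfolding spans_def by auto
    then have "connected_by E S a (fst (E!j)) \<longleftrightarrow> connected_by E S a (snd (E!j))"
      using rtranclp_trans by metis
    then show ?thesis by (simp add: edge_diff_def p_def)
  qed
  ultimately have "\<forall>j\<in>insert k S. (edge_diff E p j)^2 = x!j"
    using p' by (simp add: \<delta>_def)
  then show ?case by blast
qed simp

lemma alg_dependent_has_cycle:
  assumes "S \<subseteq> {..<length E}" "alg_dependent E S"
  shows "has_cycle E S"
proof (rule ccontr)
  assume acyclic: "\<not> has_cycle E S"
  obtain f :: "complex list \<Rightarrow> complex" and x where f: "\<forall>p. f (meas_map E p) = 0" "length x = length E" "f x \<noteq> 0"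
    "\<forall>x x'. length x = length E \<longrightarrow> length x' = length E \<longrightarrow> (\<forall>k\<in>S. x!k = x'!k) \<longrightarrow> f x = f x'"
    using assms(2) unfolding alg_dependent_def by blast
  obtain p where p: "\<forall>k\<in>S. (edge_diff E p k)^2 = x!k"
    using acyclic_edge_diffs_surj[OF finite_subset[OF assms(1)] acyclic] by blast
  have "\<forall>k\<in>S. x ! k = meas_map E p ! k"
    using p assms(1) by (auto simp: nth_meas_map)
  then have "f x = f (meas_map E p)" using f(2,4) length_meas_map by blast
  then show False using f(1,3) by simp
qed

lemma has_cycle_transfer:
  assumes "length E = length E'" "M1 E = M1 E'" "S \<subseteq> {..<length E}"
  shows "has_cycle E S \<longleftrightarrow> has_cycle E' S"
proof
  assume "has_cycle E S"
  then have "alg_dependent E' S"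
    using assms by (intro alg_dependent_transfer[OF assms(1,2)] has_cycle_alg_dependent)
  then show "has_cycle E' S" using assms by (intro alg_dependent_has_cycle) simp_all
next
  assume "has_cycle E' S"
  then have "alg_dependent E S"
    using assms by (intro alg_dependent_transfer[OF assms(1,2)[symmetric]] has_cycle_alg_dependent) simp_all
  then show "has_cycle E S" using assms by (intro alg_dependent_has_cycle)
qed

lemma connected_by_remove:
  assumes "connected_by E T u w" "spans E (T - {k}) k"
  shows "connected_by E (T - {k}) u w"
  using assms(1)
proof (induction rule: rtranclp_induct)
  case (step y z)
  have "connected_by E (T - {k}) y z"
  proof (cases rule: edge_stepE[OF step(2)])
    case (1 i) then show ?thesis
      using assms(2) unfolding spans_def edge_step_def by (cases "i = k") auto
  next
    case (2 i) then show ?thesis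
      using spans_sym[OF assms(2)] unfolding edge_step_def by (cases "i = k") auto
  qed
  with step(3) show ?case by (rule rtranclp_trans)
qed simp

lemma exists_acyclic_connecting:
  assumes "finite T" "connected_by E T u w"
  shows "\<exists>T'\<subseteq>T. connected_by E T' u w \<and> \<not> has_cycle E T'"
  using assms
proof (induction "card T" arbitrary: T rule: less_induct)
  case less
  show ?case
  proof (cases "has_cycle E T")
    case True
    then obtain k where k: "k \<in> T" "spans E (T - {k}) k" unfolding has_cycle_def by blast
    have "card (T - {k}) < card T" using card_Diff1_less[OF less.prems(1) k(1)] .
    then show ?thesis
      using less.hyps[of "T - {k}"] less.prems connected_by_remove[OF less.prems(2) k(2)] by blast
  qed (use less.prems in blast)
qed

lemma connected_by_insert:
  assumes "connected_by E (insert j R) u w"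
  shows "connected_by E R u w \<or> connected_by E R u (fst (E!j)) \<or> connected_by E R u (snd (E!j))"
  using assms
proof (induction rule: rtranclp_induct)
  case (step y z)
  from step(2) obtain i where i: "i \<in> insert j R" "{y,z} = {fst (E!i), snd (E!i)}"
    unfolding edge_step_def by blast
  show ?case
  proof (cases "i = j")
    case True
    then have "y = fst (E!j) \<or> y = snd (E!j)" using i(2) by (auto simp: doubleton_eq_iff)
    then show ?thesis using step(3) by blast
  next
    case False
    then have "edge_step E R y z" using i unfolding edge_step_def by blast
    then show ?thesis using step(3) by (meson rtranclp.rtrancl_into_rtrancl)
  qed
qed simp

lemma connected_by_insert_cross:
  assumes "connected_by E (insert j R) x y" "\<not> connected_by E R x y"
  shows "(connected_by E R x (fst (E!j)) \<and> connected_by E R y (snd (E!j))) \<or>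
         (connected_by E R x (snd (E!j)) \<and> connected_by E R y (fst (E!j)))"
proof -
  have "connected_by E R x (fst (E!j)) \<or> connected_by E R x (snd (E!j))"
    using connected_by_insert[OF assms(1)] assms(2) by simp
  moreover have "\<not> connected_by E R y x" using assms(2) connected_by_sym by metis
  then have "connected_by E R y (fst (E!j)) \<or> connected_by E R y (snd (E!j))"
    using connected_by_insert[OF connected_by_sym[OF assms(1)]] by simp
  moreover have "\<not> (connected_by E R x c \<and> connected_by E R y c)" for c
  proof
    assume "connected_by E R x c \<and> connected_by E R y c"
    then have "connected_by E R x y" by (metis connected_by_sym rtranclp_trans)
    with assms(2) show False ..
  qed
  ultimately show ?thesis by metis
qed

lemma spans_exchange:
  assumes "\<not> spans E R j" "spans E (insert e R) j"
  shows "spans E (insert j R) e"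
proof -
  let ?T = "insert j R"
  have "spans E ?T j" by (rule spans_mem) simp
  then have j: "connected_by E ?T (fst (E!j)) (snd (E!j))" "connected_by E ?T (snd (E!j)) (fst (E!j))"
    unfolding spans_def by (auto intro: connected_by_sym)
  have R_T: "connected_by E R s t \<Longrightarrow> connected_by E ?T s t" for s t
    by (erule connected_by_mono) (rule subset_insertI)
  from connected_by_insert_cross[of E e R "fst (E!j)" "snd (E!j)"] assms
  consider
      "connected_by E R (fst (E!j)) (fst (E!e))" "connected_by E R (snd (E!j)) (snd (E!e))"
    | "connected_by E R (fst (E!j)) (snd (E!e))" "connected_by E R (snd (E!j)) (fst (E!e))"
    unfolding spans_def by metis
  then show ?thesis
  proof cases
    case 1
    have "connected_by E ?T (fst (E!e)) (fst (E!j))" using R_T[OF connected_by_sym[OF 1(1)]] .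
    also have "connected_by E ?T (fst (E!j)) (snd (E!j))" by (fact j(1))
    also have "connected_by E ?T (snd (E!j)) (snd (E!e))" using R_T[OF 1(2)] .
    finally show ?thesis unfolding spans_def .
  next
    case 2
    have "connected_by E ?T (fst (E!e)) (snd (E!j))" using R_T[OF connected_by_sym[OF 2(2)]] .
    also have "connected_by E ?T (snd (E!j)) (fst (E!j))" by (fact j(2))
    also have "connected_by E ?T (fst (E!j)) (snd (E!e))" using R_T[OF 2(1)] .
    finally show ?thesis unfolding spans_def .
  qed
qed

lemma spans_iff_circuit:
  assumes "finite T" "e \<notin> T"
  shows "spans E T e \<longleftrightarrow> (\<exists>T'\<subseteq>T. has_cycle E (insert e T') \<and> \<not> has_cycle E T')"
proof
  assume "spans E T e"
  from exists_acyclic_connecting[OF assms(1) this[unfolded spans_def]]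
  obtain T' where T': "T' \<subseteq> T" "spans E T' e" "\<not> has_cycle E T'"
    unfolding spans_def by (elim exE conjE)
  have "insert e T' - {e} = T'" using T'(1) assms(2) by blast
  then have "has_cycle E (insert e T')" using T'(2) unfolding has_cycle_def by (metis insertI1)
  then show "\<exists>T'\<subseteq>T. has_cycle E (insert e T') \<and> \<not> has_cycle E T'" using T' by blast
next
  assume "\<exists>T'\<subseteq>T. has_cycle E (insert e T') \<and> \<not> has_cycle E T'"
  then obtain T' where T': "T' \<subseteq> T" "has_cycle E (insert e T')" "\<not> has_cycle E T'" by blast
  have e: "e \<notin> T'" using T'(1) assms(2) by blast
  obtain j where j: "j \<in> insert e T'" "spans E (insert e T' - {j}) j"
    using T'(2) unfolding has_cycle_def by blast
  have "spans E T' e"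
  proof (cases "j = e")
    case True
    then show ?thesis using j(2) e by simp
  next
    case False
    then have jT: "j \<in> T'" using j(1) by simp
    have "\<not> spans E (T' - {j}) j" using T'(3) jT unfolding has_cycle_def by metis
    moreover have "spans E (insert e (T' - {j})) j"
      using j(2) False by (simp add: insert_Diff_if)
    ultimately have "spans E (insert j (T' - {j})) e" by (rule spans_exchange)
    then show ?thesis using jT by (simp add: insert_absorb)
  qed
  then show "spans E T e" using T'(1) by (rule spans_mono)
qed

lemma spans_transfer:
  assumes "length E = length E'" "M1 E = M1 E'" "T \<subseteq> {..<length E}" "e < length E"
  shows "spans E T e \<longleftrightarrow> spans E' T e"
proof (cases "e \<in> T")
  case False
  have "finite T" using finite_subset[OF assms(3)] by simp
  moreover have "has_cycle E S \<longleftrightarrow> has_cycle E' S" if "S \<subseteq> insert e T" for S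
    using that assms by (intro has_cycle_transfer) auto
  then have "(has_cycle E (insert e T') \<and> \<not> has_cycle E T') \<longleftrightarrow>
      (has_cycle E' (insert e T') \<and> \<not> has_cycle E' T')" if "T' \<subseteq> T" for T'
    using that by (meson insert_mono subset_insertI2)
  ultimately show ?thesis
    using False by (simp add: spans_iff_circuit) blast
qed (simp add: spans_mem)

text \<open>D is the complement of a hyperplane of the graphic matroid.\<close>
definition cocircuit :: "('a \<times> 'a) list \<Rightarrow> nat set \<Rightarrow> bool" where
  "cocircuit E D \<longleftrightarrow> D \<noteq> {} \<and> D \<subseteq> {..<length E} \<and>
     (\<forall>k\<in>D. \<not> spans E ({..<length E} - D) k) \<and>
     (\<forall>j\<in>D. \<forall>k\<in>D. spans E (insert j ({..<length E} - D)) k)"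

text \<open>The graphic matroid restricted to R is connected: no proper nonempty R1 \<subset> R is a
  separator.\<close>
definition connected_restriction :: "('a \<times> 'a) list \<Rightarrow> nat set \<Rightarrow> bool" where
  "connected_restriction E R \<longleftrightarrow> (\<forall>R1\<subseteq>R. R1 \<noteq> {} \<longrightarrow> R1 \<noteq> R \<longrightarrow>
     (\<exists>e\<in>R1. \<exists>T\<subseteq>R. spans E T e \<and> \<not> spans E (T \<inter> R1) e))"

definition nonseparating_cocircuit :: "('a \<times> 'a) list \<Rightarrow> nat set \<Rightarrow> bool" where
  "nonseparating_cocircuit E D \<longleftrightarrow>
     cocircuit E D \<and> connected_restriction E ({..<length E} - D)"

lemma nonseparating_cocircuit_transfer:
  assumes len: "length E = length E'" and M: "M1 E = M1 E'" and "nonseparating_cocircuit E D"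
  shows "nonseparating_cocircuit E' D"
proof -
  let ?R = "{..<length E} - D"
  have sp: "spans E T e \<longleftrightarrow> spans E' T e" if "T \<subseteq> {..<length E}" "e < length E" for T e
    using spans_transfer[OF len M that] .
  have "cocircuit E' D"
    using assms(3) len sp[of ?R] sp[of "insert _ ?R"]
    unfolding nonseparating_cocircuit_def cocircuit_def by (auto simp: subset_iff)
  moreover have "connected_restriction E' ?R"
    unfolding connected_restriction_def
  proof (intro allI impI)
    fix R1 assume R1: "R1 \<subseteq> ?R" "R1 \<noteq> {}" "R1 \<noteq> ?R"
    have "connected_restriction E ?R" using assms(3) unfolding nonseparating_cocircuit_def ..
    from this[unfolded connected_restriction_def, rule_format, OF R1]
    obtain e T where e: "e \<in> R1" "T \<subseteq> ?R" "spans E T e" "\<not> spans E (T \<inter> R1) e"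
      by blast
    moreover have "T \<subseteq> {..<length E}" "e < length E" using e(1,2) R1(1) by auto
    ultimately have "spans E' T e" "\<not> spans E' (T \<inter> R1) e"
      using sp[of T e] sp[of "T \<inter> R1" e] by auto
    with e(1,2) show "\<exists>e\<in>R1. \<exists>T\<subseteq>?R. spans E' T e \<and> \<not> spans E' (T \<inter> R1) e"
      by blast
  qed
  ultimately show ?thesis using len unfolding nonseparating_cocircuit_def by simp
qed

section \<open>Vertex stars as nonseparating cocircuits\<close>

definition edges_in :: "('a \<times> 'a) list \<Rightarrow> 'a set \<Rightarrow> nat set" where
  "edges_in E W = {k. k < length E \<and> fst (E!k) \<in> W \<and> snd (E!k) \<in> W}"

definition star :: "('a \<times> 'a) list \<Rightarrow> 'a \<Rightarrow> nat set" where
  "star E v = {k. k < length E \<and> (fst (E!k) = v \<or> snd (E!k) = v)}"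

definition other_end :: "('a \<times> 'a) list \<Rightarrow> 'a \<Rightarrow> nat \<Rightarrow> 'a" where
  "other_end E v k = (if fst (E!k) = v then snd (E!k) else fst (E!k))"

lemma ordered_graph_edge:
  assumes "ordered_graph V E" "k < length E"
  shows "fst (E!k) \<in> V" "snd (E!k) \<in> V" "fst (E!k) \<noteq> snd (E!k)"
  using assms nth_mem[OF assms(2)] unfolding ordered_graph_def by (auto simp: split_beta)

lemma connected_on_connected_by:
  assumes "connected_on W E" "u \<in> W" "w \<in> W"
  shows "connected_by E (edges_in E W) u w"
proof -
  have "(\<lambda>x y. x \<in> W \<and> y \<in> W \<and> adj E x y)\<^sup>*\<^sup>* u w"
    using assms unfolding connected_on_def by blast
  then show ?thesis
  proof (induction rule: rtranclp_induct)
    case (step y z)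
    then obtain k where "k < length E" "{fst (E!k), snd (E!k)} = {y, z}" "y \<in> W" "z \<in> W"
      unfolding adj_def by (auto simp: in_set_conv_nth split_beta)
    then have "edge_step E (edges_in E W) y z"
      unfolding edge_step_def edges_in_def by (auto simp: doubleton_eq_iff)
    with step.IH show ?case by (rule rtranclp.rtrancl_into_rtrancl)
  qed simp
qed

lemma connected_by_avoiding:
  assumes "connected_by E R v x" "\<forall>i\<in>R. fst (E!i) \<noteq> v \<and> snd (E!i) \<noteq> v"
  shows "x = v"
  using assms(1)
proof (induction rule: rtranclp_induct)
  case (step y z)
  then show ?case using assms(2) by (auto elim: edge_stepE)
qed simp

lemma connected_by_first_edge:
  assumes "connected_by E T u w" "u \<noteq> w"
  obtains i where "i \<in> T" "fst (E!i) = u \<or> snd (E!i) = u"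
proof -
  obtain y where "edge_step E T u y" using assms by (metis converse_rtranclpE)
  then show ?thesis using that by (auto elim: edge_stepE)
qed

lemma star_edge_ends:
  assumes "ordered_graph V E" "k \<in> star E v"
  shows "{fst (E!k), snd (E!k)} = {v, other_end E v k}" "other_end E v k \<in> V - {v}"
  using assms ordered_graph_edge[OF assms(1), of k] unfolding star_def other_end_def by auto

lemma star_not_spanned_by_complement:
  assumes "ordered_graph V E" "k \<in> star E v"
  shows "\<not> spans E ({..<length E} - star E v) k"
proof
  let ?R = "{..<length E} - star E v"
  assume "spans E ?R k"
  then have "connected_by E ?R v (other_end E v k)"
    using star_edge_ends(1)[OF assms] by (simp add: spans_iff_connected_by)
  moreover have "\<forall>i\<in>?R. fst (E!i) \<noteq> v \<and> snd (E!i) \<noteq> v" unfolding star_def by auto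
  ultimately have "other_end E v k = v" by (rule connected_by_avoiding)
  with star_edge_ends(2)[OF assms] show False by simp
qed

lemma connected_by_crossing:
  assumes "connected_by E R x y" "i1 \<in> R1" "R1 \<subseteq> R" "x \<in> {fst (E!i1), snd (E!i1)}"
    "i2 \<in> R - R1" "y \<in> {fst (E!i2), snd (E!i2)}"
  shows "\<exists>c. \<exists>i1\<in>R1. \<exists>i2\<in>R - R1. c \<in> {fst (E!i1), snd (E!i1)} \<and> c \<in> {fst (E!i2), snd (E!i2)}"
proof (rule ccontr)
  assume no_crossing: "\<not> ?thesis"
  have "\<exists>i\<in>R1. y \<in> {fst (E!i), snd (E!i)}"
    using assms(1)
  proof (induction rule: rtranclp_induct)
    case (step y z)
    then obtain i' where "i' \<in> R1" "y \<in> {fst (E!i'), snd (E!i')}" by blast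
    from step(2) show ?case
      by (cases rule: edge_stepE) (use assms(3) no_crossing \<open>i' \<in> R1\<close> \<open>y \<in> _\<close> in blast)+
  qed (use assms(2,4) in blast)
  then show False using no_crossing assms(5,6) by blast
qed

locale three_connected_graph =
  fixes V :: "'a set" and E :: "('a \<times> 'a) list"
  assumes ordered_graph: "ordered_graph V E" and three_connected: "k_connected 3 V E"
begin

lemma obtain_third_vertex:
  obtains c where "c \<in> V" "c \<noteq> u" "c \<noteq> v"
proof -
  have "finite V" "card V > 3"
    using ordered_graph three_connected unfolding ordered_graph_def k_connected_def by auto
  moreover have "card {u, v} \<le> 2" by (simp add: card_insert_if)
  ultimately have "\<not> V \<subseteq> {u, v}" using card_mono[of "{u, v}" V] by auto
  then show ?thesis using that by blast
qed

lemma connected_by_minus: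
  assumes "X \<subseteq> V" "card X < 3" "u \<in> V - X" "w \<in> V - X"
  shows "connected_by E (edges_in E (V - X)) u w"
  using three_connected assms unfolding k_connected_def by (blast intro: connected_on_connected_by)

lemma edges_in_minus_vertex: "edges_in E (V - {v}) = {..<length E} - star E v"
  using ordered_graph_edge[OF ordered_graph] unfolding edges_in_def star_def by auto

lemma star_nonempty:
  assumes "v \<in> V"
  shows "star E v \<noteq> {}"
proof -
  obtain u where u: "u \<in> V" "u \<noteq> v" using obtain_third_vertex by metis
  have "connected_by E (edges_in E (V - {})) v u"
    using connected_by_minus[of "{}" v u] assms u by simp
  then obtain i where "i \<in> edges_in E (V - {})" "fst (E!i) = v \<or> snd (E!i) = v"
    using u(2) by (auto elim: connected_by_first_edge)
  then show ?thesis unfolding star_def edges_in_def by auto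
qed

lemma inj_on_star: "inj_on (star E) V"
proof (rule inj_onI, rule ccontr)
  fix u v assume uv: "u \<in> V" "v \<in> V" "star E u = star E v" "u \<noteq> v"
  obtain c where c: "c \<in> V" "c \<noteq> u" "c \<noteq> v" using obtain_third_vertex by metis
  have "connected_by E (edges_in E (V - {v})) u c"
    using connected_by_minus[of "{v}" u c] uv c by simp
  then obtain i where "i \<in> edges_in E (V - {v})" "fst (E!i) = u \<or> snd (E!i) = u"
    using c(2) by (auto elim: connected_by_first_edge)
  then have "i \<in> star E u" "i \<notin> star E v" unfolding star_def edges_in_def by auto
  then show False using uv(3) by simp
qed

lemma star_spanned_by_complement_insert:
  assumes "v \<in> V" "j \<in> star E v" "k \<in> star E v"
  shows "spans E (insert j ({..<length E} - star E v)) k"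
proof -
  let ?T = "insert j ({..<length E} - star E v)"
  note ends = star_edge_ends[OF ordered_graph]
  have "connected_by E (edges_in E (V - {v})) (other_end E v j) (other_end E v k)"
    using connected_by_minus[of "{v}"] assms ends(2) by simp
  then have "connected_by E ?T (other_end E v j) (other_end E v k)"
    by (rule connected_by_mono) (auto simp: edges_in_minus_vertex)
  moreover have "edge_step E ?T v (other_end E v j)"
    using ends(1)[OF assms(2)] unfolding edge_step_def by blast
  ultimately have "connected_by E ?T v (other_end E v k)"
    by (rule converse_rtranclp_into_rtranclp[rotated])
  then show ?thesis using ends(1)[OF assms(3)] by (simp add: spans_iff_connected_by)
qed

text \<open>If an edge i1 \<in> R1 and an edge i2 \<notin> R1 share the vertex c, then joining their other
  ends in G - {v, c} and adding i2 gives a set T spanning i1, while T \<inter> R1 avoids c.\<close>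
lemma crossing_edges_not_separator:
  assumes "v \<in> V" and R: "R = {..<length E} - star E v" and "R1 \<subseteq> R"
    and i1: "i1 \<in> R1" "c \<in> {fst (E!i1), snd (E!i1)}"
    and i2: "i2 \<in> R - R1" "c \<in> {fst (E!i2), snd (E!i2)}"
  shows "\<exists>e\<in>R1. \<exists>T\<subseteq>R. spans E T e \<and> \<not> spans E (T \<inter> R1) e"
proof -
  have i1R: "i1 \<in> R" using i1(1) assms(3) by blast
  define a where "a = other_end E c i1"
  define b where "b = other_end E c i2"
  have ends: "{fst (E!i), snd (E!i)} = {c, other_end E c i}" "other_end E c i \<in> V - {v, c}"
    if "i \<in> R" "c \<in> {fst (E!i), snd (E!i)}" for i
    using that ordered_graph_edge[OF ordered_graph, of i]
    unfolding R star_def other_end_def by auto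
  have c: "c \<in> V - {v}" using ordered_graph_edge[OF ordered_graph, of i1] i1R i1(2)
    unfolding R star_def by auto
  define T where "T = insert i2 (edges_in E (V - {v, c}))"
  have "T \<subseteq> R" using i2(1) unfolding T_def R edges_in_def star_def by auto
  moreover have "spans E T i1"
  proof -
    have "connected_by E (edges_in E (V - {v, c})) a b"
      using connected_by_minus[of "{v, c}" a b] assms(1) c ends(2) i1R i1(2) i2 unfolding a_def b_def
      by (simp add: card_insert_if)
    then have "connected_by E T a b" by (rule connected_by_mono) (auto simp: T_def)
    moreover have "edge_step E T b c"
      using ends(1)[of i2] i2 unfolding edge_step_def T_def b_def by (auto simp: insert_commute)
    ultimately have "connected_by E T a c" by (rule rtranclp.rtrancl_into_rtrancl)
    then show ?thesis
      using ends(1)[OF i1R i1(2)] connected_by_sym unfolding a_def by (simp add: spans_iff_connected_by)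
  qed
  moreover have "\<not> spans E (T \<inter> R1) i1"
  proof
    have "\<forall>i\<in>T \<inter> R1. fst (E!i) \<noteq> c \<and> snd (E!i) \<noteq> c"
      using i2(1) unfolding T_def edges_in_def by auto
    then have "connected_by E (T \<inter> R1) c x \<Longrightarrow> x = c" for x
      by (rule connected_by_avoiding[rotated])
    moreover assume "spans E (T \<inter> R1) i1"
    then have "connected_by E (T \<inter> R1) c (other_end E c i1)"
      using ends(1)[OF i1R i1(2)] by (simp add: spans_iff_connected_by)
    ultimately show False using ends(2)[OF i1R i1(2)] by blast
  qed
  ultimately show ?thesis using i1(1) by blast
qed

lemma complement_star_connected_restriction:
  assumes "v \<in> V"
  shows "connected_restriction E ({..<length E} - star E v)"
  unfolding connected_restriction_def
proof (intro allI impI)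
  let ?R = "{..<length E} - star E v"
  fix R1 assume R1: "R1 \<subseteq> ?R" "R1 \<noteq> {}" "R1 \<noteq> ?R"
  obtain e1 e2 where e: "e1 \<in> R1" "e2 \<in> ?R - R1" using R1 by blast
  have "fst (E!e) \<in> V - {v}" if "e \<in> ?R" for e
    using that ordered_graph_edge[OF ordered_graph, of e] unfolding star_def by auto
  then have "fst (E!e1) \<in> V - {v}" "fst (E!e2) \<in> V - {v}" using e R1(1) by blast+
  then have "connected_by E ?R (fst (E!e1)) (fst (E!e2))"
    using connected_by_minus[of "{v}"] assms by (simp add: edges_in_minus_vertex)
  from connected_by_crossing[OF this e(1) R1(1) _ e(2)]
  obtain c i1 i2 where "i1 \<in> R1" "c \<in> {fst (E!i1), snd (E!i1)}"
    "i2 \<in> ?R - R1" "c \<in> {fst (E!i2), snd (E!i2)}"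
    by auto
  then show "\<exists>e\<in>R1. \<exists>T\<subseteq>?R. spans E T e \<and> \<not> spans E (T \<inter> R1) e"
    using crossing_edges_not_separator[OF assms refl R1(1)] by blast
qed

lemma star_nonseparating_cocircuit:
  assumes "v \<in> V"
  shows "nonseparating_cocircuit E (star E v)"
proof -
  have "star E v \<subseteq> {..<length E}" unfolding star_def by blast
  then show ?thesis
    unfolding nonseparating_cocircuit_def cocircuit_def
    using star_nonempty[OF assms] star_not_spanned_by_complement[OF ordered_graph]
      star_spanned_by_complement_insert[OF assms] complement_star_connected_restriction[OF assms]
    by blast
qed

end

lemma connected_by_within_component:
  assumes "connected_by E T u w" "T \<subseteq> R" "connected_by E R u a"
  shows "connected_by E (T \<inter> {r\<in>R. connected_by E R (fst (E!r)) a}) u w \<and> connected_by E R w a"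
  using assms(1)
proof (induction rule: rtranclp_induct)
  case (step y z)
  let ?R1 = "{r\<in>R. connected_by E R (fst (E!r)) a}"
  from step(2) obtain i where i: "i \<in> T" "{y, z} = {fst (E!i), snd (E!i)}"
    unfolding edge_step_def by blast
  have ya: "connected_by E R y a" using step.IH by blast
  have "edge_step E R y z" using i assms(2) unfolding edge_step_def by blast
  then have "connected_by E R y z" by (rule r_into_rtranclp)
  then have za: "connected_by E R z a"
    using ya connected_by_sym rtranclp_trans by metis
  have "connected_by E R (fst (E!i)) a" using i(2) ya za by (auto simp: doubleton_eq_iff)
  then have "edge_step E (T \<inter> ?R1) y z" using i assms(2) unfolding edge_step_def by blast
  then show ?case using step.IH za by (meson rtranclp.rtrancl_into_rtrancl)
qed (use assms(3) in simp)

lemma connected_restriction_component: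
  assumes "connected_restriction E R" "r \<in> R" "connected_by E R (fst (E!r)) a"
  shows "\<forall>r'\<in>R. connected_by E R (fst (E!r')) a"
proof (rule ccontr)
  define R1 where "R1 = {r\<in>R. connected_by E R (fst (E!r)) a}"
  assume "\<not> ?thesis"
  then have "R1 \<subseteq> R" "R1 \<noteq> {}" "R1 \<noteq> R" using assms(2,3) unfolding R1_def by auto
  from assms(1)[unfolded connected_restriction_def, rule_format, OF this]
  obtain e T where e: "e \<in> R1" "T \<subseteq> R" "spans E T e" "\<not> spans E (T \<inter> R1) e"
    by blast
  have "connected_by E R (fst (E!e)) a" using e(1) unfolding R1_def by blast
  from connected_by_within_component[OF e(3)[unfolded spans_def] e(2) this]
  have "spans E (T \<inter> R1) e" unfolding spans_def R1_def by (rule conjunct1)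
  with e(4) show False ..
qed

lemma cocircuit_edge_crosses:
  assumes "cocircuit E D" "j \<in> D" "k \<in> D"
  defines "R \<equiv> {..<length E} - D"
  shows "(connected_by E R (fst (E!k)) (fst (E!j)) \<and> connected_by E R (snd (E!k)) (snd (E!j))) \<or>
         (connected_by E R (fst (E!k)) (snd (E!j)) \<and> connected_by E R (snd (E!k)) (fst (E!j)))"
proof (cases "k = j")
  case False
  have "connected_by E (insert j R) (fst (E!k)) (snd (E!k))" "\<not> connected_by E R (fst (E!k)) (snd (E!k))"
    using assms unfolding cocircuit_def spans_def by auto
  then show ?thesis by (rule connected_by_insert_cross)
qed simp

lemma star_eq_if_edgeless_component:
  assumes "D \<subseteq> {..<length E}" and R: "R = {..<length E} - D"
    and edgeless: "\<forall>r\<in>R. \<not> connected_by E R (fst (E!r)) z"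
    and reach: "\<forall>k\<in>D. connected_by E R (fst (E!k)) z \<or> connected_by E R (snd (E!k)) z"
  shows "D = star E z"
proof
  have isolated: "\<forall>r\<in>R. fst (E!r) \<noteq> z \<and> snd (E!r) \<noteq> z"
  proof
    fix r assume r: "r \<in> R"
    have "connected_by E R (fst (E!r)) (snd (E!r))" using spans_mem[OF r] unfolding spans_def .
    then show "fst (E!r) \<noteq> z \<and> snd (E!r) \<noteq> z" using edgeless r by auto
  qed
  have "x = z" if "connected_by E R x z" for x
    using connected_by_avoiding[OF connected_by_sym[OF that] isolated] .
  then show "D \<subseteq> star E z" using reach assms(1) unfolding star_def by blast
  show "star E z \<subseteq> D" using isolated unfolding R star_def by blast
qed

text \<open>Take an edge j \<in> D with ends a and b. As R has no separator, the component of a or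
  that of b in R contains no edge of R, and its vertex is incident to exactly the edges of D.\<close>
lemma nonseparating_cocircuit_is_star:
  assumes "ordered_graph V E" "nonseparating_cocircuit E D"
  shows "\<exists>w\<in>V. D = star E w"
proof -
  define R where "R = {..<length E} - D"
  have cocircuit: "cocircuit E D" and D: "D \<noteq> {}" "D \<subseteq> {..<length E}"
    and connected: "connected_restriction E R"
    using assms(2) unfolding nonseparating_cocircuit_def cocircuit_def R_def by auto
  obtain j where j: "j \<in> D" using D(1) by blast
  define a where "a = fst (E!j)"
  define b where "b = snd (E!j)"
  have ab: "a \<in> V" "b \<in> V" "\<not> connected_by E R a b"
    using ordered_graph_edge[OF assms(1)] j D(2) cocircuit
    unfolding a_def b_def spans_def cocircuit_def R_def by auto
  have star_if_edgeless: "D = star E z"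
    if "z \<in> {a, b}" "\<forall>r\<in>R. \<not> connected_by E R (fst (E!r)) z" for z
  proof (rule star_eq_if_edgeless_component[OF D(2) R_def that(2)])
    show "\<forall>k\<in>D. connected_by E R (fst (E!k)) z \<or> connected_by E R (snd (E!k)) z"
      using cocircuit_edge_crosses[OF cocircuit j] that(1) unfolding R_def a_def b_def by blast
  qed
  show ?thesis
  proof (cases "\<exists>r\<in>R. connected_by E R (fst (E!r)) a")
    case False
    then show ?thesis using star_if_edgeless[of a] ab(1) by blast
  next
    case True
    then have "\<forall>r\<in>R. connected_by E R (fst (E!r)) a"
      using connected_restriction_component[OF connected] by blast
    then have "\<forall>r\<in>R. \<not> connected_by E R (fst (E!r)) b"
      using ab(3) connected_by_sym rtranclp_trans by metis
    then show ?thesis using star_if_edgeless[of b] ab(2) by blast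
  qed
qed

lemma star_correspondence_bij:
  assumes "ordered_graph VG EG" "length EG = length EH" "no_isolated VH EH" "inj_on (star EG) VG"
    and \<sigma>: "\<forall>v\<in>VG. \<sigma> v \<in> VH \<and> star EG v = star EH (\<sigma> v)"
  shows "bij_betw \<sigma> VG VH"
    and "\<forall>k<length EG. {fst (EH!k), snd (EH!k)} = {\<sigma> (fst (EG!k)), \<sigma> (snd (EG!k))}"
proof -
  have inj: "inj_on \<sigma> VG"
    using assms(4) \<sigma> unfolding inj_on_def by metis
  show edges: "\<forall>k<length EG. {fst (EH!k), snd (EH!k)} = {\<sigma> (fst (EG!k)), \<sigma> (snd (EG!k))}"
  proof (intro allI impI)
    fix k assume k: "k < length EG"
    note ends = ordered_graph_edge[OF assms(1) k]
    have "k \<in> star EH (\<sigma> (fst (EG!k)))" "k \<in> star EH (\<sigma> (snd (EG!k)))"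
      using \<sigma> ends k unfolding star_def by auto
    moreover have "\<sigma> (fst (EG!k)) \<noteq> \<sigma> (snd (EG!k))"
      using inj ends unfolding inj_on_def by blast
    ultimately show "{fst (EH!k), snd (EH!k)} = {\<sigma> (fst (EG!k)), \<sigma> (snd (EG!k))}"
      unfolding star_def by auto
  qed
  have "VH \<subseteq> \<sigma> ` VG"
  proof
    fix w assume "w \<in> VH"
    then obtain x where "x \<in> set EH" "w \<in> {fst x, snd x}"
      using assms(3) unfolding no_isolated_def by auto
    then obtain k where k: "k < length EH" "w \<in> {fst (EH!k), snd (EH!k)}"
      by (auto simp: in_set_conv_nth)
    then show "w \<in> \<sigma> ` VG"
      using edges ordered_graph_edge[OF assms(1)] assms(2) by auto
  qed
  then show "bij_betw \<sigma> VG VH" using inj \<sigma> unfolding bij_betw_def by blast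
qed

theorem mainTheorem5:
  fixes VG :: "'a set" and EG :: "('a \<times> 'a) list"
    and VH :: "'b set" and EH :: "('b \<times> 'b) list"
    and m :: nat
  assumes "ordered_graph VG EG" and "ordered_graph VH EH"
    and "card VG \<ge> 3" and "card VH \<ge> 3"
    and "length EG = m" and "length EH = m"
    and "k_connected 3 VG EG"
    and "no_isolated VH EH"
    and "M1 EG = M1 EH"
  shows "\<exists>\<sigma>. bij_betw \<sigma> VG VH \<and>
     (\<forall>k < m. \<forall>i j. EG ! k = (i, j) \<longrightarrow> {fst (EH ! k), snd (EH ! k)} = {\<sigma> i, \<sigma> j})"
proof -
  interpret three_connected_graph VG EG using assms(1,7) by unfold_locales
  have len: "length EG = length EH" using assms(5,6) by simp
  have "\<forall>v\<in>VG. \<exists>w. w \<in> VH \<and> star EG v = star EH w"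
  proof
    fix v assume "v \<in> VG"
    then have "nonseparating_cocircuit EH (star EG v)"
      by (intro nonseparating_cocircuit_transfer[OF len assms(9)] star_nonseparating_cocircuit)
    then show "\<exists>w. w \<in> VH \<and> star EG v = star EH w"
      using nonseparating_cocircuit_is_star[OF assms(2)] by blast
  qed
  then obtain \<sigma> where \<sigma>: "\<forall>v\<in>VG. \<sigma> v \<in> VH \<and> star EG v = star EH (\<sigma> v)" by metis
  note bij = star_correspondence_bij[OF assms(1) len assms(8) inj_on_star \<sigma>]
  show ?thesis using bij assms(5) by (intro exI[of _ \<sigma>]) auto
qed

end
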